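(* Over profiles whose ballots are strict weak orders (ties allowed), let $F$ be a VSCC satisfying Downward Homogeneity, Coherent Defeat, and Tolerant Positive Involvement. Then $F(\mathbf P)\subseteq SC(\mathbf P)$ for every profile $\mathbf P$.
   Context: Profiles: $\mathbf P:V\to\mathcal W(X)$, $V$ nonempty finite set of voters, $X=X(\mathbf P)$ nonempty finite set of candidates (from fixed infinite sets), $\mathcal W(X)$ the strict weak orders on $X$ (ties allowed). "Ranks $x$ above $y$" means strictly. $\mathrm{Margin}_{\mathbf P}(x,y)$ = #voters with $x$ strictly above $y$ minus #voters with $y$ strictly above $x$; $x$ majority preferred to $y$ if $>0$. Majority path: sequence with positive consecutive margins; strength = minimum of these. $(x,y)\in sc(\mathbf P)$ iff $\mathrm{Margin}_{\mathbf P}(x,y)>0$ exceeds the strength of every majority path from $y$ to $x$; $SC(\mathbf P)$ = set of $y$ with no $x$ such that $(x,y)\in sc(\mathbf P)$. A VSCC is $F$ with $\varnothing\ne F(\mathbf P)\subseteq X(\mathbf P)$. Downward Homogeneity: $F(\mathbf P)\subseteq F(2\mathbf P)$ ($2\mathbf P$ duplicates each voter). Coherent Defeat: $\mathrm{Margin}_{\mathbf P}(x,y)>0$ and no majority path from $y$ to $x$ imply $y\notin F(\mathbf P)$. Tolerant Positive Involvement: if $x\in F(\mathbf P)$ and $\mathbf P'$ adds one new voter who ranks $x$ strictly above every other candidate $y$ to which $x$ is not majority preferred in $\mathbf P$, then $x\in F(\mathbf P')$. *)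

theory Defs
  imports Main
begin

definition strict_weak_order_on :: "'c set \<Rightarrow> ('c \<times> 'c) set \<Rightarrow> bool" where
  "strict_weak_order_on X R \<longleftrightarrow>
     R \<subseteq> X \<times> X \<and>
     (\<forall>a b. (a, b) \<in> R \<longrightarrow> (b, a) \<notin> R) \<and>
     (\<forall>a\<in>X. \<forall>b\<in>X. \<forall>c\<in>X. (a, c) \<in> R \<longrightarrow> (a, b) \<in> R \<or> (b, c) \<in> R)"

text \<open>A profile is a triple (V, X, P): voters, candidates, ballots.
Ballots of non-voters are normalised to the empty relation.\<close>
type_synonym ('v, 'c) profile = "'v set \<times> 'c set \<times> ('v \<Rightarrow> ('c \<times> 'c) set)"

definition voters :: "('v, 'c) profile \<Rightarrow> 'v set" where
  "voters Pr = fst Pr"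

definition cands :: "('v, 'c) profile \<Rightarrow> 'c set" where
  "cands Pr = fst (snd Pr)"

definition ballot :: "('v, 'c) profile \<Rightarrow> 'v \<Rightarrow> ('c \<times> 'c) set" where
  "ballot Pr = snd (snd Pr)"

definition is_profile :: "('v, 'c) profile \<Rightarrow> bool" where
  "is_profile Pr \<longleftrightarrow>
     finite (voters Pr) \<and> voters Pr \<noteq> {} \<and>
     finite (cands Pr) \<and> cands Pr \<noteq> {} \<and>
     (\<forall>i\<in>voters Pr. strict_weak_order_on (cands Pr) (ballot Pr i)) \<and>
     (\<forall>i. i \<notin> voters Pr \<longrightarrow> ballot Pr i = {})"

definition margin :: "('v, 'c) profile \<Rightarrow> 'c \<Rightarrow> 'c \<Rightarrow> int" where
  "margin Pr x y =
     int (card {i \<in> voters Pr. (x, y) \<in> ballot Pr i})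
   - int (card {i \<in> voters Pr. (y, x) \<in> ballot Pr i})"

definition majority_path :: "('v, 'c) profile \<Rightarrow> 'c list \<Rightarrow> bool" where
  "majority_path Pr zs \<longleftrightarrow>
     length zs \<ge> 2 \<and> set zs \<subseteq> cands Pr \<and>
     (\<forall>i < length zs - 1. margin Pr (zs ! i) (zs ! Suc i) > 0)"

definition path_strength :: "('v, 'c) profile \<Rightarrow> 'c list \<Rightarrow> int" where
  "path_strength Pr zs = Min {margin Pr (zs ! i) (zs ! Suc i) | i. i < length zs - 1}"

definition majority_path_from_to :: "('v, 'c) profile \<Rightarrow> 'c \<Rightarrow> 'c \<Rightarrow> 'c list \<Rightarrow> bool" where
  "majority_path_from_to Pr a b zs \<longleftrightarrow> majority_path Pr zs \<and> hd zs = a \<and> last zs = b"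

definition sc :: "('v, 'c) profile \<Rightarrow> ('c \<times> 'c) set" where
  "sc Pr = {(x, y). x \<in> cands Pr \<and> y \<in> cands Pr \<and> margin Pr x y > 0 \<and>
              (\<forall>zs. majority_path_from_to Pr y x zs \<longrightarrow> margin Pr x y > path_strength Pr zs)}"

definition SC :: "('v, 'c) profile \<Rightarrow> 'c set" where
  "SC Pr = {y \<in> cands Pr. \<not> (\<exists>x. (x, y) \<in> sc Pr)}"

definition VSCC :: "(('v, 'c) profile \<Rightarrow> 'c set) \<Rightarrow> bool" where
  "VSCC F \<longleftrightarrow> (\<forall>Pr. is_profile Pr \<longrightarrow> F Pr \<noteq> {} \<and> F Pr \<subseteq> cands Pr)"

text \<open>Pr2 is a copy of 2Pr: every voter of Pr is replaced by two voters with
the same ballot (formally: a map g from the new voters onto the old ones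
with fibres of size exactly two, preserving ballots).\<close>
definition doubling :: "('v, 'c) profile \<Rightarrow> ('v, 'c) profile \<Rightarrow> bool" where
  "doubling Pr Pr2 \<longleftrightarrow> is_profile Pr2 \<and> cands Pr2 = cands Pr \<and>
     (\<exists>g. g ` voters Pr2 \<subseteq> voters Pr \<and>
          (\<forall>i\<in>voters Pr. card {j \<in> voters Pr2. g j = i} = 2) \<and>
          (\<forall>j\<in>voters Pr2. ballot Pr2 j = ballot Pr (g j)))"

definition downward_homogeneity :: "(('v, 'c) profile \<Rightarrow> 'c set) \<Rightarrow> bool" where
  "downward_homogeneity F \<longleftrightarrow>
     (\<forall>Pr. is_profile Pr \<longrightarrow> (\<exists>Pr2. doubling Pr Pr2 \<and> F Pr \<subseteq> F Pr2))"

definition coherent_defeat :: "(('v, 'c) profile \<Rightarrow> 'c set) \<Rightarrow> bool" where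
  "coherent_defeat F \<longleftrightarrow>
     (\<forall>Pr x y. is_profile Pr \<and> margin Pr x y > 0 \<and>
        \<not> (\<exists>zs. majority_path_from_to Pr y x zs) \<longrightarrow> y \<notin> F Pr)"

definition add_voter :: "('v, 'c) profile \<Rightarrow> 'v \<Rightarrow> ('v, 'c) profile \<Rightarrow> bool" where
  "add_voter Pr i Pr' \<longleftrightarrow> is_profile Pr' \<and> i \<notin> voters Pr \<and>
     voters Pr' = insert i (voters Pr) \<and> cands Pr' = cands Pr \<and>
     (\<forall>j\<in>voters Pr. ballot Pr' j = ballot Pr j)"

definition tolerant_positive_involvement :: "(('v, 'c) profile \<Rightarrow> 'c set) \<Rightarrow> bool" where
  "tolerant_positive_involvement F \<longleftrightarrow>
     (\<forall>Pr Pr' i x. is_profile Pr \<and> x \<in> F Pr \<and> add_voter Pr i Pr' \<and>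
        (\<forall>y\<in>cands Pr. y \<noteq> x \<and> \<not> margin Pr x y > 0 \<longrightarrow> (x, y) \<in> ballot Pr' i)
        \<longrightarrow> x \<in> F Pr')"

end

(* Suppose y \<in> F P although x defeats y in Split Cycle with margin k, and let C be the set of
   candidates reachable from y along edges of margin at least k; then x \<notin> C, as no majority
   path from y to x has strength k. By Downward Homogeneity y stays in F for 2P, where all margins
   are even and those leaving C are at most 2k - 2. Now add 2k - 2 voters one at a time, each
   putting y above every candidate that y does not currently beat and the rest of C at the bottom;
   by Tolerant Positive Involvement y stays in F. Each such voter lowers the margins from C - {y}
   to the outside by one and moves the margin of y over an outside candidate one step towards
   zero, so by parity all margins leaving C end up nonpositive while x still beats y by 2. Hence
   there is no majority path from y to x, and Coherent Defeat excludes y. *)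

theory Submission
  imports Defs
begin

(* The effect of one added voter on the margin of y over a candidate b outside C: the voter
   puts y above b exactly when y does not already beat b. *)
definition toward_zero :: "int \<Rightarrow> int" where
  "toward_zero v = (if 0 < v then v - 1 else v + 1)"

lemma toward_zero_funpow_nonpos:
  "m + int n \<le> 1 \<Longrightarrow> (toward_zero ^^ n) m = m + int n"
  by (induction n) (auto simp: toward_zero_def)

lemma toward_zero_funpow_le: "(toward_zero ^^ n) m \<le> max (m - int n) 1"
  by (induction n) (auto simp: toward_zero_def)

lemma toward_zero_funpow_even: "even ((toward_zero ^^ n) m) \<longleftrightarrow> even (m + int n)"
  by (induction n) (auto simp: toward_zero_def)

lemma toward_zero_funpow_le_0:
  assumes "m \<le> int n" "even (m + int n)"
  shows "(toward_zero ^^ n) m \<le> 0"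
proof -
  have "(toward_zero ^^ n) m \<le> 1"
    using toward_zero_funpow_le[of n m] assms(1) by simp
  moreover have "even ((toward_zero ^^ n) m)"
    using toward_zero_funpow_even assms(2) by blast
  ultimately show ?thesis
    by presburger
qed

lemma margin_swap: "margin Q a b = - margin Q b a"
  by (simp add: margin_def)

lemma margin_doubling:
  assumes "doubling Pr Pr2" "is_profile Pr"
  shows "margin Pr2 a b = 2 * margin Pr a b"
proof -
  obtain g where g: "g ` voters Pr2 \<subseteq> voters Pr"
      "\<forall>i\<in>voters Pr. card {j \<in> voters Pr2. g j = i} = 2"
      "\<forall>j\<in>voters Pr2. ballot Pr2 j = ballot Pr (g j)"
    using assms(1) unfolding doubling_def by blast
  have fin: "finite (voters Pr)" "finite (voters Pr2)"
    using assms unfolding doubling_def is_profile_def by auto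
  have count: "card {j \<in> voters Pr2. p \<in> ballot Pr2 j} = 2 * card {i \<in> voters Pr. p \<in> ballot Pr i}"
    for p
  proof -
    let ?S = "{i \<in> voters Pr. p \<in> ballot Pr i}"
    have "{j \<in> voters Pr2. p \<in> ballot Pr2 j} = (\<Union>i\<in>?S. {j \<in> voters Pr2. g j = i})"
      using g by auto
    also have "card \<dots> = (\<Sum>i\<in>?S. card {j \<in> voters Pr2. g j = i})"
      using fin by (intro card_UN_disjoint) auto
    also have "\<dots> = (\<Sum>i\<in>?S. 2)"
      using g(2) by (intro sum.cong) auto
    finally show ?thesis
      by simp
  qed
  show ?thesis
    unfolding margin_def using count[of "(a, b)"] count[of "(b, a)"] by simp
qed

definition add_ballot :: "('v, 'c) profile \<Rightarrow> 'v \<Rightarrow> ('c \<times> 'c) set \<Rightarrow> ('v, 'c) profile" where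
  "add_ballot Q i R = (insert i (voters Q), cands Q, (ballot Q)(i := R))"

lemma add_ballot_simps [simp]:
  "voters (add_ballot Q i R) = insert i (voters Q)"
  "cands (add_ballot Q i R) = cands Q"
  "ballot (add_ballot Q i R) = (ballot Q)(i := R)"
  by (simp_all add: add_ballot_def voters_def cands_def ballot_def)

lemma add_voter_add_ballot:
  assumes "is_profile Q" "strict_weak_order_on (cands Q) R" "i \<notin> voters Q"
  shows "add_voter Q i (add_ballot Q i R)"
  using assms unfolding add_voter_def is_profile_def by auto

lemma margin_add_ballot:
  assumes "is_profile Q" "i \<notin> voters Q"
  shows "margin (add_ballot Q i R) a b = margin Q a b + of_bool ((a, b) \<in> R) - of_bool ((b, a) \<in> R)"
proof -
  have fin: "finite (voters Q)"
    using assms(1) unfolding is_profile_def by blast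
  have count: "card {j \<in> insert i (voters Q). p \<in> ((ballot Q)(i := R)) j}
      = card {j \<in> voters Q. p \<in> ballot Q j} + of_bool (p \<in> R)" for p
  proof -
    have "{j \<in> insert i (voters Q). p \<in> ((ballot Q)(i := R)) j}
        = (if p \<in> R then insert i else id) {j \<in> voters Q. p \<in> ballot Q j}"
      using assms(2) by auto
    then show ?thesis
      using fin assms(2) by simp
  qed
  show ?thesis
    unfolding margin_def add_ballot_simps using count[of "(a, b)"] count[of "(b, a)"] by simp
qed

definition rank_ballot :: "'c set \<Rightarrow> ('c \<Rightarrow> nat) \<Rightarrow> ('c \<times> 'c) set" where
  "rank_ballot X r = {(a, b). a \<in> X \<and> b \<in> X \<and> r a < r b}"

lemma strict_weak_order_on_rank_ballot: "strict_weak_order_on X (rank_ballot X r)"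
  unfolding strict_weak_order_on_def rank_ballot_def by auto

lemma tpi_add_voter_step:
  assumes inf: "infinite (UNIV :: 'v set)" and tpi: "tolerant_positive_involvement F"
    and Q: "is_profile (Q :: ('v, 'c) profile)" and yF: "y \<in> F Q"
    and C: "y \<in> C" "C \<subseteq> cands Q"
  obtains Q' where "is_profile Q'" "cands Q' = cands Q" "y \<in> F Q'"
    "\<And>a b. a \<in> C - {y} \<Longrightarrow> b \<in> cands Q - C \<Longrightarrow> margin Q' a b = margin Q a b - 1"
    "\<And>b. b \<in> cands Q - C \<Longrightarrow> margin Q' y b = toward_zero (margin Q y b)"
proof -
  obtain i where i: "i \<notin> voters Q"
    using ex_new_if_finite[OF inf] Q unfolding is_profile_def by blast
  \<comment> \<open>Rank 0 is the top: the candidates outside C that y beats, then y, then the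
      other candidates outside C, then the rest of C.\<close>
  define r :: "'c \<Rightarrow> nat" where
    "r z = (if z \<in> C - {y} then 3 else if z = y then 1 else if 0 < margin Q y z then 0 else 2)" for z
  define R where "R = rank_ballot (cands Q) r"
  let ?Q' = "add_ballot Q i R"
  have add: "add_voter Q i ?Q'"
    using add_voter_add_ballot[OF Q _ i] strict_weak_order_on_rank_ballot unfolding R_def by blast
  have "(y, z) \<in> ballot ?Q' i" if "z \<in> cands Q" "z \<noteq> y" "\<not> 0 < margin Q y z" for z
    using that C by (auto simp: R_def rank_ballot_def r_def)
  then have winner: "y \<in> F ?Q'"
    using tpi Q yF add unfolding tolerant_positive_involvement_def by blast
  have cluster: "margin ?Q' a b = margin Q a b - 1" if "a \<in> C - {y}" "b \<in> cands Q - C" for a b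
    using that C margin_add_ballot[OF Q i, of R a b] by (auto simp: R_def rank_ballot_def r_def)
  have leader: "margin ?Q' y b = toward_zero (margin Q y b)" if "b \<in> cands Q - C" for b
    using that C margin_add_ballot[OF Q i, of R y b]
    by (auto simp: R_def rank_ballot_def r_def toward_zero_def)
  show thesis
    using add winner cluster leader unfolding add_voter_def by (intro that[of ?Q']) auto
qed

lemma tpi_add_voters:
  assumes inf: "infinite (UNIV :: 'v set)" and tpi: "tolerant_positive_involvement F"
    and Q: "is_profile (Q :: ('v, 'c) profile)" and yF: "y \<in> F Q"
    and C: "y \<in> C" "C \<subseteq> cands Q"
  shows "\<exists>Q'. is_profile Q' \<and> cands Q' = cands Q \<and> y \<in> F Q' \<and>
    (\<forall>a \<in> C - {y}. \<forall>b \<in> cands Q - C. margin Q' a b = margin Q a b - int n) \<and>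
    (\<forall>b \<in> cands Q - C. margin Q' y b = (toward_zero ^^ n) (margin Q y b))"
proof (induction n)
  case 0
  show ?case
    using Q yF by (intro exI[of _ Q]) auto
next
  case (Suc n)
  then obtain Q1 where Q1: "is_profile Q1" "cands Q1 = cands Q" "y \<in> F Q1"
    "\<forall>a \<in> C - {y}. \<forall>b \<in> cands Q - C. margin Q1 a b = margin Q a b - int n"
    "\<forall>b \<in> cands Q - C. margin Q1 y b = (toward_zero ^^ n) (margin Q y b)"
    by blast
  obtain Q2 where "is_profile Q2" "cands Q2 = cands Q1" "y \<in> F Q2"
    "\<And>a b. a \<in> C - {y} \<Longrightarrow> b \<in> cands Q1 - C \<Longrightarrow> margin Q2 a b = margin Q1 a b - 1"
    "\<And>b. b \<in> cands Q1 - C \<Longrightarrow> margin Q2 y b = toward_zero (margin Q1 y b)"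
    using tpi_add_voter_step[OF inf tpi Q1(1,3) C(1)] C(2) Q1(2) by metis
  then show ?case
    using Q1 by (intro exI[of _ Q2]) auto
qed

lemma path_strength_ge:
  assumes "2 \<le> length zs" "\<forall>i < length zs - 1. k \<le> margin Pr (zs ! i) (zs ! Suc i)"
  shows "k \<le> path_strength Pr zs"
proof -
  have "{margin Pr (zs ! i) (zs ! Suc i) | i. i < length zs - 1}
      = (\<lambda>i. margin Pr (zs ! i) (zs ! Suc i)) ` {..<length zs - 1}"
    by auto
  moreover have "{..<length zs - 1} \<noteq> {}"
    using assms(1) by (auto simp: lessThan_empty_iff)
  ultimately show ?thesis
    unfolding path_strength_def using assms(2) by (subst Min_ge_iff) auto
qed

definition margin_at_least :: "('v, 'c) profile \<Rightarrow> int \<Rightarrow> ('c \<times> 'c) set" where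
  "margin_at_least Pr k = {(a, b). a \<in> cands Pr \<and> b \<in> cands Pr \<and> k \<le> margin Pr a b}"

lemma trancl_margin_at_least_path:
  assumes "(a, b) \<in> (margin_at_least Pr k)\<^sup>+"
  shows "\<exists>zs. 2 \<le> length zs \<and> hd zs = a \<and> last zs = b \<and> set zs \<subseteq> cands Pr \<and>
           (\<forall>i < length zs - 1. k \<le> margin Pr (zs ! i) (zs ! Suc i))"
  using assms
proof (induction rule: converse_trancl_induct)
  case (base a)
  then show ?case
    by (intro exI[of _ "[a, b]"]) (auto simp: margin_at_least_def less_Suc_eq)
next
  case (step a z)
  then obtain zs where zs: "2 \<le> length zs" "hd zs = z" "last zs = b" "set zs \<subseteq> cands Pr"
      "\<forall>i < length zs - 1. k \<le> margin Pr (zs ! i) (zs ! Suc i)"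
    by blast
  have "zs \<noteq> []"
    using zs(1) by auto
  then have "a \<in> cands Pr" "k \<le> margin Pr a (zs ! 0)"
    using step(1) zs(2) by (auto simp: margin_at_least_def hd_conv_nth)
  then show ?case
    using zs by (intro exI[of _ "a # zs"]) (auto simp: nth_Cons split: nat.split)
qed

lemma majority_path_of_trancl_margin_at_least:
  assumes "(a, b) \<in> (margin_at_least Pr k)\<^sup>+" "0 < k"
  shows "\<exists>zs. majority_path_from_to Pr a b zs \<and> k \<le> path_strength Pr zs"
proof -
  obtain zs where zs: "2 \<le> length zs" "hd zs = a" "last zs = b" "set zs \<subseteq> cands Pr"
      "\<forall>i < length zs - 1. k \<le> margin Pr (zs ! i) (zs ! Suc i)"
    using trancl_margin_at_least_path[OF assms(1)] by blast
  then have "majority_path_from_to Pr a b zs"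
    using assms(2) unfolding majority_path_from_to_def majority_path_def by force
  then show ?thesis
    using path_strength_ge[OF zs(1,5)] by blast
qed

lemma sc_defeater_not_reachable:
  assumes "(x, y) \<in> sc Pr"
  shows "(y, x) \<notin> (margin_at_least Pr (margin Pr x y))\<^sup>*"
proof
  assume reach: "(y, x) \<in> (margin_at_least Pr (margin Pr x y))\<^sup>*"
  have pos: "0 < margin Pr x y"
    using assms unfolding sc_def by blast
  then have "x \<noteq> y"
    by (auto simp: margin_def)
  then have "(y, x) \<in> (margin_at_least Pr (margin Pr x y))\<^sup>+"
    using reach by (auto simp: rtrancl_eq_or_trancl)
  from majority_path_of_trancl_margin_at_least[OF this pos]
  obtain zs where path: "majority_path_from_to Pr y x zs" "margin Pr x y \<le> path_strength Pr zs"
    by blast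
  have "path_strength Pr zs < margin Pr x y"
    using assms path(1) unfolding sc_def by blast
  with path(2) show False
    by simp
qed

lemma ex_nth_leaving:
  "zs \<noteq> [] \<Longrightarrow> hd zs \<in> C \<Longrightarrow> last zs \<notin> C \<Longrightarrow> \<exists>i < length zs - 1. zs ! i \<in> C \<and> zs ! Suc i \<notin> C"
proof (induction zs)
  case Nil
  then show ?case
    by simp
next
  case (Cons a zs)
  show ?case
  proof (cases "zs \<noteq> [] \<and> hd zs \<in> C")
    case True
    then obtain i where "i < length zs - 1" "zs ! i \<in> C" "zs ! Suc i \<notin> C"
      using Cons by auto
    then show ?thesis
      by (intro exI[of _ "Suc i"]) auto
  next
    case False
    have "zs \<noteq> []"
      using Cons.prems by auto
    with False show ?thesis
      using Cons.prems by (intro exI[of _ 0]) (simp add: hd_conv_nth)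
  qed
qed

lemma majority_path_leaves:
  assumes "majority_path_from_to Q a b zs" "a \<in> C" "b \<notin> C"
  shows "\<exists>c \<in> C. \<exists>d \<in> cands Q - C. 0 < margin Q c d"
proof -
  have path: "2 \<le> length zs" "set zs \<subseteq> cands Q" "\<forall>i < length zs - 1. 0 < margin Q (zs ! i) (zs ! Suc i)"
    and ends: "hd zs = a" "last zs = b"
    using assms(1) unfolding majority_path_from_to_def majority_path_def by auto
  have "zs \<noteq> []"
    using path(1) by auto
  then obtain i where i: "i < length zs - 1" "zs ! i \<in> C" "zs ! Suc i \<notin> C"
    using ex_nth_leaving[of zs C] ends assms(2,3) by blast
  have "zs ! Suc i \<in> cands Q"
    using i(1) path(2) by (auto dest: nth_mem)
  then show ?thesis
    using i path(3) by blast
qed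

lemma not_winner_if_defeat_isolable:
  fixes F :: "('v, 'c) profile \<Rightarrow> 'c set"
  assumes inf: "infinite (UNIV :: 'v set)"
    and tpi: "tolerant_positive_involvement F" and cd: "coherent_defeat F"
    and Q: "is_profile Q" and C: "y \<in> C" "C \<subseteq> cands Q" and x: "x \<in> cands Q" "x \<notin> C"
    and even: "even n" "\<And>a b. even (margin Q a b)"
    and beats: "int n < margin Q x y"
    and bounded: "\<And>a b. a \<in> C \<Longrightarrow> b \<in> cands Q - C \<Longrightarrow> margin Q a b \<le> int n"
  shows "y \<notin> F Q"
proof
  assume "y \<in> F Q"
  then obtain Q' where Q': "is_profile Q'" "cands Q' = cands Q" "y \<in> F Q'"
      "\<forall>a \<in> C - {y}. \<forall>b \<in> cands Q - C. margin Q' a b = margin Q a b - int n"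
      "\<forall>b \<in> cands Q - C. margin Q' y b = (toward_zero ^^ n) (margin Q y b)"
    using tpi_add_voters[OF inf tpi Q _ C] by blast
  have "margin Q' y x = margin Q y x + int n"
    using Q'(5) x beats margin_swap[of Q x y] by (simp add: toward_zero_funpow_nonpos)
  then have "0 < margin Q' x y"
    using beats margin_swap[of Q' x y] margin_swap[of Q x y] by simp
  moreover have "margin Q' a b \<le> 0" if "a \<in> C" "b \<in> cands Q' - C" for a b
  proof (cases "a = y")
    case True
    have "even (margin Q y b + int n)"
      using even by simp
    then show ?thesis
      using True Q'(2,5) that bounded toward_zero_funpow_le_0 by simp
  next
    case False
    then show ?thesis
      using Q'(2,4) that bounded by fastforce
  qed
  then have "\<not> (\<exists>zs. majority_path_from_to Q' y x zs)"
    using majority_path_leaves C(1) x(2) by (meson not_le)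
  ultimately have "y \<notin> F Q'"
    using cd Q'(1) unfolding coherent_defeat_def by blast
  with Q'(3) show False
    by simp
qed

lemma sc_defeated_not_winner:
  fixes F :: "('v, 'c) profile \<Rightarrow> 'c set"
  assumes inf: "infinite (UNIV :: 'v set)" and dh: "downward_homogeneity F"
    and tpi: "tolerant_positive_involvement F" and cd: "coherent_defeat F"
    and Pr: "is_profile Pr" and y: "y \<in> cands Pr" and sc: "(x, y) \<in> sc Pr"
  shows "y \<notin> F Pr"
proof
  assume "y \<in> F Pr"
  then obtain Pr2 where Pr2: "doubling Pr Pr2" "y \<in> F Pr2"
    using dh Pr unfolding downward_homogeneity_def by blast
  have margin2: "margin Pr2 a b = 2 * margin Pr a b" for a b
    using margin_doubling[OF Pr2(1) Pr] .
  define k where "k = margin Pr x y"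
  define C where "C = (margin_at_least Pr k)\<^sup>* `` {y}"
  have x: "x \<in> cands Pr" "x \<notin> C" "0 < k"
    using sc sc_defeater_not_reachable[OF sc] unfolding sc_def C_def k_def by auto
  have C_cands: "C \<subseteq> cands Pr"
    using y by (auto simp: C_def margin_at_least_def elim: rtranclE)
  have leaving: "margin Pr a b < k" if "a \<in> C" "b \<in> cands Pr - C" for a b
  proof (rule ccontr)
    assume "\<not> margin Pr a b < k"
    then have "(a, b) \<in> margin_at_least Pr k"
      using that C_cands unfolding margin_at_least_def by auto
    then show False
      using that unfolding C_def by (auto intro: rtrancl_into_rtrancl)
  qed
  have Pr2_profile: "is_profile Pr2" "cands Pr2 = cands Pr"
    using Pr2(1) unfolding doubling_def by auto
  define n where "n = 2 * nat (k - 1)"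
  have n: "int n = 2 * k - 2"
    using x(3) unfolding n_def by simp
  \<comment> \<open>The doubling makes all margins even, which the parity argument for y needs.\<close>
  have "y \<notin> F Pr2"
  proof (rule not_winner_if_defeat_isolable[OF inf tpi cd Pr2_profile(1)])
    show "margin Pr2 a b \<le> int n" if "a \<in> C" "b \<in> cands Pr2 - C" for a b
      using leaving[of a b] that Pr2_profile(2) by (simp add: margin2 n)
  qed (use x C_cands Pr2_profile(2) in \<open>auto simp: margin2 n n_def C_def k_def\<close>)
  with Pr2(2) show False
    by simp
qed

theorem theorem7p9:
  fixes F :: "('v, 'c) profile \<Rightarrow> 'c set"
  assumes "infinite (UNIV :: 'v set)"
    and "infinite (UNIV :: 'c set)"
    and "VSCC F"
    and "downward_homogeneity F"
    and "coherent_defeat F"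
    and "tolerant_positive_involvement F"
    and "is_profile Pr"
  shows "F Pr \<subseteq> SC Pr"
proof
  fix y
  assume yF: "y \<in> F Pr"
  then have "y \<in> cands Pr"
    using assms(3,7) unfolding VSCC_def by blast
  moreover have "(x, y) \<notin> sc Pr" for x
    using sc_defeated_not_winner[OF assms(1,4,6,5,7) \<open>y \<in> cands Pr\<close>] yF by blast
  ultimately show "y \<in> SC Pr"
    unfolding SC_def by blast
qed

end
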